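(* Let $W:\mathbb R\to SO(4)$ be a symmetric loop which is not null-homotopic as a loop in $SO(4)$, and let $\tilde W$ be a continuous lift of $W$; then $\tilde W(k+2\pi)=-\tilde W(k)$ for all $k$. (a) If $T(\tilde W(0))=\tilde W(0)$, then $T(\tilde W(\pi))=-\tilde W(\pi)$, i.e. $\tilde W(\pi)\in X_1\sqcup Y_1$. (b) If $T(\tilde W(0))=-\tilde W(0)$, then $T(\tilde W(\pi))=\tilde W(\pi)$, i.e. $\tilde W(\pi)\in X_0\sqcup Y_0$.
   Context: Identify $\mathbb H$ with $\mathbb R^4$ via $x_0+x_1i+x_2j+x_3k\leftrightarrow(x_0,x_1,x_2,x_3)^T$; $Sp(1)$ is the group of unit quaternions, with componentwise product and conjugation on $Sp(1)\times Sp(1)$. Let $p:Sp(1)\times Sp(1)\to SO(4)$ send $(g,h)$ to the matrix of the $\mathbb R$-linear map $x\mapsto g^{-1}xh$ (a two-to-one covering map with kernel $\{\pm(1,1)\}$). Let $w=\begin{pmatrix}0&-I_2\\ I_2&0\end{pmatrix}$, $\tilde w=(1,j)$, and $T(u,v)=\overline{\tilde w^{-1}(u,v)\tilde w}=(\bar u,\ j^{-1}\bar v j)$. Let $X_0=\{(1,a+bi+dk):a^2+b^2+d^2=1\}$, $Y_0=-X_0$, $X_1=\{(bi+cj+dk,\ j):b^2+c^2+d^2=1\}$, $Y_1=\{(bi+cj+dk,\ -j):b^2+c^2+d^2=1\}$. A symmetric loop is a continuous $2\pi$-periodic map $W:\mathbb R\to SO(4)$ with $wW(k)w^{-1}=W(-k)^{-1}$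 for all $k$. A lift of $W$ is a continuous $\tilde W:\mathbb R\to Sp(1)\times Sp(1)$ with $p\circ\tilde W=W$. (Physically: non-vanishing Fu–Kane–Mele invariant.) *)

theory Defs
  imports "HOL-Analysis.Analysis"
begin

text \<open>Quaternions x0 + x1 i + x2 j + x3 k are identified with vectors in real^4,
  with x$1 = x0, x$2 = x1, x$3 = x2, x$4 = x3.\<close>

type_synonym quat = "real ^ 4"

definition quat :: "real \<Rightarrow> real \<Rightarrow> real \<Rightarrow> real \<Rightarrow> quat" where
  "quat a b c d = vector [a, b, c, d]"

definition qmult :: "quat \<Rightarrow> quat \<Rightarrow> quat" where
  "qmult x y = quat
     (x$1 * y$1 - x$2 * y$2 - x$3 * y$3 - x$4 * y$4)
     (x$1 * y$2 + x$2 * y$1 + x$3 * y$4 - x$4 * y$3)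
     (x$1 * y$3 - x$2 * y$4 + x$3 * y$1 + x$4 * y$2)
     (x$1 * y$4 + x$2 * y$3 - x$3 * y$2 + x$4 * y$1)"

definition qconj :: "quat \<Rightarrow> quat" where
  "qconj x = quat (x$1) (- x$2) (- x$3) (- x$4)"

definition qinv :: "quat \<Rightarrow> quat" where
  "qinv x = (inverse ((norm x)\<^sup>2)) *\<^sub>R qconj x"

definition qone :: quat where "qone = quat 1 0 0 0"
definition qi :: quat where "qi = quat 0 1 0 0"
definition qj :: quat where "qj = quat 0 0 1 0"
definition qk :: quat where "qk = quat 0 0 0 1"

definition Sp1 :: "quat set" where
  "Sp1 = {x. norm x = 1}"

definition SO4 :: "(real ^ 4 ^ 4) set" where
  "SO4 = {A. orthogonal_matrix A \<and> det A = 1}"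

definition pcov :: "quat \<times> quat \<Rightarrow> real ^ 4 ^ 4" where
  "pcov gh = matrix (\<lambda>x. qmult (qmult (qinv (fst gh)) x) (snd gh))"

definition wmat :: "real ^ 4 ^ 4" where
  "wmat = (\<chi> r c. if r = 1 \<and> c = 3 then -1 else if r = 2 \<and> c = 4 then -1
                  else if r = 3 \<and> c = 1 then 1 else if r = 4 \<and> c = 2 then 1 else 0)"

definition Tmap :: "quat \<times> quat \<Rightarrow> quat \<times> quat" where
  "Tmap uv = (qconj (fst uv), qmult (qmult (qinv qj) (qconj (snd uv))) qj)"

definition X0 :: "(quat \<times> quat) set" where
  "X0 = {(qone, quat a b 0 d) | a b d. a\<^sup>2 + b\<^sup>2 + d\<^sup>2 = 1}"
definition Y0 :: "(quat \<times> quat) set" where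
  "Y0 = uminus ` X0"
definition X1 :: "(quat \<times> quat) set" where
  "X1 = {(quat 0 b c d, qj) | b c d. b\<^sup>2 + c\<^sup>2 + d\<^sup>2 = 1}"
definition Y1 :: "(quat \<times> quat) set" where
  "Y1 = {(quat 0 b c d, - qj) | b c d. b\<^sup>2 + c\<^sup>2 + d\<^sup>2 = 1}"

definition symmetric_loop :: "(real \<Rightarrow> real ^ 4 ^ 4) \<Rightarrow> bool" where
  "symmetric_loop W \<longleftrightarrow> continuous_on UNIV W \<and> (\<forall>k. W k \<in> SO4) \<and>
     (\<forall>k. W (k + 2 * pi) = W k) \<and>
     (\<forall>k. wmat ** W k ** matrix_inv wmat = matrix_inv (W (- k)))"

definition null_homotopic_loop_SO4 :: "(real \<Rightarrow> real ^ 4 ^ 4) \<Rightarrow> bool" where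
  "null_homotopic_loop_SO4 W \<longleftrightarrow>
     (\<exists>a. homotopic_loops SO4 (\<lambda>t. W (2 * pi * t)) (\<lambda>t. a))"

definition is_lift :: "(real \<Rightarrow> real ^ 4 ^ 4) \<Rightarrow> (real \<Rightarrow> quat \<times> quat) \<Rightarrow> bool" where
  "is_lift W Wt \<longleftrightarrow> continuous_on UNIV Wt \<and> (\<forall>k. Wt k \<in> Sp1 \<times> Sp1) \<and>
     (\<forall>k. pcov (Wt k) = W k)"

end

theory Submission
  imports Defs
begin

text \<open>A lift covers the loop, so W(k + 2\<pi>) = W(k) forces Wt(k + 2\<pi>) = \<plusminus>Wt(k), and likewise the
  symmetry of W forces Wt(-k) = \<plusminus>T(Wt(k)), since p identifies exactly the pairs (g,h) and
  (-g,-h). By continuity and connectedness of \<real> each sign is constant. The first sign is -1,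
  for otherwise Wt would be a closed loop in the simply connected space Sp(1) \<times> Sp(1) and W,
  its image under p, would be null-homotopic. The second sign is read off at k = 0, and
  evaluating both relations at k = \<pi> gives T(Wt(\<pi>)) = \<mp>Wt(\<pi>). Solving these two fixed-point
  equations of T in coordinates yields the sets X0 \<union> Y0 and X1 \<union> Y1.\<close>

notation qmult (infixl "\<odot>" 70)

lemma quat_nth [simp]:
  "quat a b c d $ 1 = a" "quat a b c d $ 2 = b" "quat a b c d $ 3 = c" "quat a b c d $ 4 = d"
  by (simp_all add: quat_def vector_def)

lemma quat_eq_iff: "(x::quat) = y \<longleftrightarrow> x$1 = y$1 \<and> x$2 = y$2 \<and> x$3 = y$3 \<and> x$4 = y$4"
  by (simp add: vec_eq_iff forall_4)

lemma norm_quat_squared: "(norm (x::quat))\<^sup>2 = (x$1)\<^sup>2 + (x$2)\<^sup>2 + (x$3)\<^sup>2 + (x$4)\<^sup>2"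
  by (simp add: norm_eq_sqrt_inner inner_vec_def sum_4 power2_eq_square)

subsection \<open>Quaternion arithmetic\<close>

lemma qmult_assoc: "x \<odot> y \<odot> z = x \<odot> (y \<odot> z)"
  by (simp add: quat_eq_iff qmult_def algebra_simps)

lemma qmult_qone [simp]: "qone \<odot> x = x" "x \<odot> qone = x"
  by (simp_all add: quat_eq_iff qmult_def qone_def)

lemma qmult_minus [simp]: "(- x) \<odot> y = - (x \<odot> y)" "x \<odot> (- y) = - (x \<odot> y)"
  by (simp_all add: quat_eq_iff qmult_def algebra_simps)

lemma qconj_minus [simp]: "qconj (- x) = - qconj x"
  and qconj_qconj [simp]: "qconj (qconj x) = x"
  and qconj_qone [simp]: "qconj qone = qone"
  by (simp_all add: quat_eq_iff qconj_def qone_def)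

lemma qconj_qmult: "qconj (x \<odot> y) = qconj y \<odot> qconj x"
  by (simp add: quat_eq_iff qconj_def qmult_def algebra_simps)

lemma norm_qconj [simp]: "norm (qconj x) = norm x"
proof -
  have "(norm (qconj x))\<^sup>2 = (norm x)\<^sup>2" by (simp add: norm_quat_squared qconj_def)
  then show ?thesis by (simp add: power2_eq_iff_nonneg)
qed

lemma norm_qmult: "norm (x \<odot> y) = norm x * norm y"
proof -
  have "(norm (x \<odot> y))\<^sup>2 = (norm x * norm y)\<^sup>2"
    by (simp add: norm_quat_squared qmult_def power_mult_distrib)
       (simp add: power2_eq_square algebra_simps)
  then show ?thesis by (simp add: power2_eq_iff_nonneg)
qed

lemma norm_qone [simp]: "norm qone = 1"
  and norm_qj [simp]: "norm qj = 1"
  by (simp_all add: norm_eq_sqrt_inner inner_vec_def sum_4 qone_def qj_def)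

lemma qconj_qmult_unit:
  assumes "norm x = 1"
  shows "qconj x \<odot> x = qone" "x \<odot> qconj x = qone"
proof -
  have "qconj x \<odot> x = (norm x)\<^sup>2 *\<^sub>R qone" "x \<odot> qconj x = (norm x)\<^sup>2 *\<^sub>R qone"
    by (simp_all add: quat_eq_iff qconj_def qmult_def qone_def norm_quat_squared)
       (simp_all add: power2_eq_square)
  with assms show "qconj x \<odot> x = qone" "x \<odot> qconj x = qone" by simp_all
qed

lemma qconj_qmult_cancel:
  assumes "norm g = 1"
  shows "qconj g \<odot> (g \<odot> y) = y" "g \<odot> (qconj g \<odot> y) = y"
  using assms by (simp_all flip: qmult_assoc add: qconj_qmult_unit)

lemma qinv_unit: "norm x = 1 \<Longrightarrow> qinv x = qconj x"
  by (simp add: qinv_def)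

text \<open>Testing on 1 gives b = conj a, so a commutes with every quaternion, in particular with
  i and j.\<close>

lemma unit_two_sided_identity:
  assumes a: "norm a = 1" and id: "\<And>x. a \<odot> x \<odot> b = x"
  shows "(a, b) = (qone, qone) \<or> (a, b) = - (qone, qone)"
proof -
  have "a \<odot> b = qone" using id[of qone] by simp
  then have b: "b = qconj a"
    by (metis a qmult_assoc qconj_qmult_unit(1) qmult_qone)
  have "a \<odot> x = x \<odot> a" for x
    by (metis id b a qmult_assoc qconj_qmult_unit(1) qmult_qone(2))
  from this[of qi] this[of qj] have z: "a$2 = 0" "a$3 = 0" "a$4 = 0"
    by (auto simp: quat_eq_iff qmult_def qi_def qj_def)
  have "(a$1)\<^sup>2 = 1" using a norm_quat_squared[of a] z by simp
  then have "a$1 = 1 \<or> a$1 = -1" by (simp add: power2_eq_1_iff)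
  then show ?thesis using z b by (auto simp: quat_eq_iff qone_def qconj_def)
qed

subsection \<open>The covering map\<close>

lemma matrix_inv_works:
  fixes A :: "'a::semiring_1^'n^'n"
  assumes "invertible A"
  shows "A ** matrix_inv A = mat 1" "matrix_inv A ** A = mat 1"
  using someI_ex[OF assms[unfolded invertible_def]] by (simp_all add: matrix_inv_def)

lemma orthogonal_matrix_invertible: "orthogonal_matrix A \<Longrightarrow> invertible A"
  unfolding orthogonal_matrix_def invertible_def by blast

lemma conjugate_eq_matrix_inv_imp:
  fixes A B C :: "'a::semiring_1^'n^'n"
  assumes "invertible A" "invertible C" "A ** B ** matrix_inv A = matrix_inv C"
  shows "C ** A ** B = A"
proof -
  have "C ** A ** B = C ** (A ** B ** matrix_inv A) ** A"
    by (simp add: matrix_inv_works(2)[OF assms(1)] flip: matrix_mul_assoc)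
  also have "\<dots> = C ** matrix_inv C ** A" by (simp only: assms(3))
  also have "\<dots> = A" by (simp add: matrix_inv_works(1)[OF assms(2)])
  finally show ?thesis .
qed

definition qsandwich :: "quat \<Rightarrow> quat \<Rightarrow> quat \<Rightarrow> quat" where
  "qsandwich g h x = qconj g \<odot> x \<odot> h"

lemma linear_qsandwich: "linear (qsandwich g h)"
  by (rule linearI) (simp_all add: qsandwich_def quat_eq_iff qmult_def qconj_def algebra_simps)

lemma pcov_eq_matrix_qsandwich: "norm g = 1 \<Longrightarrow> pcov (g, h) = matrix (qsandwich g h)"
  by (simp add: pcov_def qinv_unit qsandwich_def[abs_def])

lemma pcov_mult_vector: "norm g = 1 \<Longrightarrow> pcov (g, h) *v x = qsandwich g h x"
  by (metis pcov_eq_matrix_qsandwich matrix_works linear_qsandwich linear_def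
      scalar_mult_eq_scaleR)

lemma wmat_mult_vector: "wmat *v x = x \<odot> qj"
  by (simp add: wmat_def matrix_vector_mult_def sum_4 quat_eq_iff qmult_def qj_def)

lemma orthogonal_matrix_wmat: "orthogonal_matrix wmat"
  unfolding orthogonal_matrix
  by (simp add: wmat_def matrix_matrix_mult_def transpose_def mat_def vec_eq_iff forall_4 sum_4)

lemma orthogonal_matrix_pcov:
  assumes "norm g = 1" "norm h = 1"
  shows "orthogonal_matrix (pcov (g, h))"
proof -
  have "orthogonal_transformation (qsandwich g h)"
    using assms by (simp add: orthogonal_transformation linear_qsandwich qsandwich_def norm_qmult)
  then show ?thesis
    using assms orthogonal_transformation_matrix pcov_eq_matrix_qsandwich by metis
qed

lemma qsandwich_eq_imp_pm:
  assumes n: "norm g = 1" "norm h = 1" "norm g' = 1" "norm h' = 1"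
    and eq: "\<And>x. qsandwich g' h' x = qsandwich g h x"
  shows "(g', h') = (g, h) \<or> (g', h') = - (g, h)"
proof -
  let ?a = "g \<odot> qconj g'" and ?b = "h' \<odot> qconj h"
  have "?a \<odot> x \<odot> ?b = x" for x
  proof -
    have "?a \<odot> x \<odot> ?b = g \<odot> (qsandwich g' h' x \<odot> qconj h)"
      by (simp add: qsandwich_def qmult_assoc)
    also have "\<dots> = g \<odot> (qsandwich g h x \<odot> qconj h)" by (simp only: eq)
    also have "\<dots> = x" by (simp add: qsandwich_def qmult_assoc qconj_qmult_cancel n qconj_qmult_unit)
    finally show ?thesis .
  qed
  then have "(?a, ?b) = (qone, qone) \<or> (?a, ?b) = - (qone, qone)"
    by (intro unit_two_sided_identity) (simp_all add: norm_qmult n)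
  then obtain e where e: "e = qone \<or> e = - qone" and a: "?a = e" and b: "?b = e" by auto
  have "g' = qconj (qconj g \<odot> ?a)" by (simp add: qconj_qmult_cancel n)
  then have "g' = qconj e \<odot> g" by (simp add: a qconj_qmult)
  moreover have "h' = ?b \<odot> h" by (simp add: qmult_assoc qconj_qmult_unit n)
  ultimately show ?thesis using e b by auto
qed

text \<open>w acts as right multiplication by j, so this is the fibre relation for W(-k) w W(k) = w.\<close>

lemma qsandwich_twisted_eq_imp_Tmap_pm:
  assumes n: "norm g = 1" "norm h = 1" "norm g' = 1" "norm h' = 1"
    and eq: "\<And>x. qsandwich g' h' (qsandwich g h x \<odot> qj) = x \<odot> qj"
  shows "(g', h') = Tmap (g, h) \<or> (g', h') = - Tmap (g, h)"
proof -
  let ?a = "qconj g' \<odot> qconj g" and ?b = "h \<odot> (qj \<odot> (h' \<odot> qconj qj))"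
  have "?a \<odot> x \<odot> ?b = x" for x
  proof -
    have "?a \<odot> x \<odot> ?b = qsandwich g' h' (qsandwich g h x \<odot> qj) \<odot> qconj qj"
      by (simp add: qsandwich_def qmult_assoc)
    also have "\<dots> = x" by (simp add: eq qmult_assoc qconj_qmult_unit)
    finally show ?thesis .
  qed
  then have "(?a, ?b) = (qone, qone) \<or> (?a, ?b) = - (qone, qone)"
    by (intro unit_two_sided_identity) (simp_all add: norm_qmult n)
  then obtain e where e: "e = qone \<or> e = - qone" and a: "?a = e" and b: "?b = e" by auto
  have "g' = qconj (?a \<odot> g)" by (simp add: qmult_assoc qconj_qmult_unit n)
  then have "g' = qconj g \<odot> qconj e" by (simp add: a qconj_qmult)
  moreover have "h' = qconj qj \<odot> (qconj h \<odot> (?b \<odot> qj))"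
    by (simp add: qmult_assoc qconj_qmult_cancel n qconj_qmult_unit)
  ultimately show ?thesis using e b by (auto simp: Tmap_def qinv_unit qmult_assoc)
qed

subsection \<open>Topology\<close>

lemma continuous_on_qmult [continuous_intros]:
  assumes "continuous_on S f" "continuous_on S g"
  shows "continuous_on S (\<lambda>z. f z \<odot> g z)"
proof -
  have "continuous_on S (\<lambda>z. (f z \<odot> g z) $ i)" for i :: 4
    by (insert exhaust_4[of i]; elim disjE; simp add: qmult_def; intro continuous_intros assms)
  then show ?thesis by (subst vec_lambda_eta[symmetric]) (rule continuous_on_vec_lambda)
qed

lemma continuous_on_qconj [continuous_intros]:
  assumes "continuous_on S f"
  shows "continuous_on S (\<lambda>z. qconj (f z))"
proof -
  have "continuous_on S (\<lambda>z. qconj (f z) $ i)" for i :: 4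
    by (insert exhaust_4[of i]; elim disjE; simp add: qconj_def; intro continuous_intros assms)
  then show ?thesis by (subst vec_lambda_eta[symmetric]) (rule continuous_on_vec_lambda)
qed

lemma continuous_on_det [continuous_intros]:
  "continuous_on S M \<Longrightarrow> continuous_on S (\<lambda>x. det (M x :: real^'n^'n))"
  unfolding det_def by (intro continuous_intros continuous_on_component)

lemma Sp1_eq_sphere: "Sp1 = sphere 0 1"
  by (auto simp: Sp1_def)

lemma continuous_on_pcov: "continuous_on (Sp1 \<times> Sp1) pcov"
proof (rule continuous_on_eq)
  show "continuous_on (Sp1 \<times> Sp1) (\<lambda>gh. \<chi> i j. qsandwich (fst gh) (snd gh) (axis j 1) $ i)"
    unfolding qsandwich_def by (intro continuous_intros)
  show "(\<chi> i j. qsandwich (fst gh) (snd gh) (axis j 1) $ i) = pcov gh" if "gh \<in> Sp1 \<times> Sp1" for gh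
    using that by (auto simp: Sp1_def pcov_eq_matrix_qsandwich matrix_def)
qed

text \<open>Orthogonality gives det = \<plusminus>1; connectedness of Sp(1) \<times> Sp(1) and det p(1,1) = 1 rule out -1.\<close>

lemma pcov_in_SO4: "pcov \<in> Sp1 \<times> Sp1 \<rightarrow> SO4"
proof -
  let ?d = "\<lambda>gh. det (pcov gh)" and ?S = "Sp1 \<times> Sp1"
  have orth: "orthogonal_matrix (pcov gh)" if "gh \<in> ?S" for gh
    using that orthogonal_matrix_pcov by (cases gh) (auto simp: Sp1_def)
  have conn: "connected (?d ` ?S)"
    by (intro connected_continuous_image continuous_on_det continuous_on_pcov)
       (simp add: Sp1_eq_sphere connected_Times connected_sphere)
  have "qsandwich qone qone = id" by (rule ext) (simp add: qsandwich_def)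
  then have "?d (qone, qone) = 1" by (simp add: pcov_eq_matrix_qsandwich matrix_id_mat_1)
  then have one: "1 \<in> ?d ` ?S" by (force simp: Sp1_def)
  have "?d gh = 1" if gh: "gh \<in> ?S" for gh
  proof (rule ccontr)
    assume "?d gh \<noteq> 1"
    then have "-1 \<in> ?d ` ?S" using det_orthogonal_matrix orth gh by (metis image_eqI)
    then have "{-1..1} \<subseteq> ?d ` ?S" using conn one connected_contains_Icc by blast
    then have "0 \<in> ?d ` ?S" by auto
    then show False using det_orthogonal_matrix orth by fastforce
  qed
  then show ?thesis using orth by (auto simp: SO4_def)
qed

lemma minus_eq_self_iff: "- x = x \<longleftrightarrow> x = (0::'a::real_vector)"
proof
  assume "- x = x"
  then have "2 *\<^sub>R x = 0" by (metis scaleR_2 add.left_inverse)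
  then show "x = 0" by simp
qed simp

lemma continuous_sign_constant:
  fixes f g :: "'a::topological_space \<Rightarrow> 'b::real_normed_vector"
  assumes "connected S" "continuous_on S f" "continuous_on S g"
    and pm: "\<And>k. k \<in> S \<Longrightarrow> f k = g k \<or> f k = - g k" and nz: "\<And>k. k \<in> S \<Longrightarrow> g k \<noteq> 0"
  shows "(\<forall>k\<in>S. f k = g k) \<or> (\<forall>k\<in>S. f k = - g k)"
proof (rule ccontr)
  let ?A = "{k \<in> S. f k = g k}" and ?B = "{k \<in> S. f k = - g k}"
  assume "\<not> ?thesis"
  then have "?A \<noteq> {}" "?B \<noteq> {}" using pm by blast+
  have "closedin (top_of_set S) {k \<in> S. f k - g k = 0}"
    using assms(2,3) by (intro continuous_closedin_preimage_constant continuous_intros)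
  moreover have "closedin (top_of_set S) {k \<in> S. f k + g k = 0}"
    using assms(2,3) by (intro continuous_closedin_preimage_constant continuous_intros)
  ultimately have "closedin (top_of_set S) ?A" "closedin (top_of_set S) ?B"
    by (simp_all add: eq_neg_iff_add_eq_0)
  moreover have "?A \<inter> ?B = {}" using nz by (auto simp: minus_eq_self_iff)
  moreover have "?A \<union> ?B = S" using pm by blast
  ultimately show False
    using \<open>connected S\<close> \<open>?A \<noteq> {}\<close> \<open>?B \<noteq> {}\<close> unfolding connected_closedin_eq by blast
qed

subsection \<open>Lifts of symmetric loops\<close>

lemma is_lift_norm:
  assumes "is_lift W Wt"
  shows "norm (fst (Wt k)) = 1" "norm (snd (Wt k)) = 1"
  using assms by (auto simp: is_lift_def Sp1_def mem_Times_iff)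

lemma is_lift_nonzero:
  assumes "is_lift W Wt"
  shows "Wt k \<noteq> 0"
  using is_lift_norm(1)[OF assms, of k] by auto

lemma is_lift_mult_vector:
  assumes "is_lift W Wt"
  shows "W k *v x = qsandwich (fst (Wt k)) (snd (Wt k)) x"
  using assms pcov_mult_vector[OF is_lift_norm(1)[OF assms, of k], of "snd (Wt k)" x]
  by (simp add: is_lift_def)

lemma null_homotopic_if_closed_lift:
  assumes lift: "is_lift W Wt" and closed: "Wt (2 * pi) = Wt 0"
  shows "null_homotopic_loop_SO4 W"
proof -
  let ?p = "\<lambda>t. Wt (2 * pi * t)"
  have cont: "continuous_on UNIV Wt" and into: "\<And>k. Wt k \<in> Sp1 \<times> Sp1"
    and covers: "\<And>k. pcov (Wt k) = W k"
    using lift by (auto simp: is_lift_def)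
  have "path ?p" unfolding path_def
    by (rule continuous_on_compose2[OF cont]) (auto intro: continuous_intros)
  moreover have "path_image ?p \<subseteq> Sp1 \<times> Sp1" using into unfolding path_image_def by blast
  moreover have "pathfinish ?p = pathstart ?p" using closed by (simp add: pathfinish_def pathstart_def)
  moreover have "simply_connected (Sp1 \<times> Sp1)" unfolding Sp1_eq_sphere
    by (intro simply_connected_Times simply_connected_sphere) simp_all
  ultimately have "homotopic_loops (Sp1 \<times> Sp1) ?p (linepath (Wt 0) (Wt 0))"
    using into simply_connected_eq_contractible_loop_any by blast
  then have "homotopic_loops SO4 (pcov \<circ> ?p) (pcov \<circ> linepath (Wt 0) (Wt 0))"
    by (rule homotopic_loops_continuous_image[OF _ continuous_on_pcov pcov_in_SO4])
  then show ?thesis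
    unfolding null_homotopic_loop_SO4_def by (auto simp: o_def linepath_refl covers)
qed

lemma lift_antiperiodic:
  assumes periodic: "\<And>k. W (k + 2 * pi) = W k"
    and essential: "\<not> null_homotopic_loop_SO4 W" and lift: "is_lift W Wt"
  shows "Wt (k + 2 * pi) = - Wt k"
proof -
  have cont: "continuous_on UNIV Wt" using lift by (simp add: is_lift_def)
  have "Wt (k + 2 * pi) = Wt k \<or> Wt (k + 2 * pi) = - Wt k" for k
  proof -
    have "qsandwich (fst (Wt (k + 2 * pi))) (snd (Wt (k + 2 * pi))) x
        = qsandwich (fst (Wt k)) (snd (Wt k)) x" for x
      by (simp only: periodic flip: is_lift_mult_vector[OF lift])
    then show ?thesis
      using qsandwich_eq_imp_pm[of "fst (Wt k)" "snd (Wt k)" "fst (Wt (k + 2 * pi))" "snd (Wt (k + 2 * pi))"]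
      by (simp add: is_lift_norm[OF lift])
  qed
  then have "(\<forall>k. Wt (k + 2 * pi) = Wt k) \<or> (\<forall>k. Wt (k + 2 * pi) = - Wt k)"
    using continuous_sign_constant[of UNIV "\<lambda>k. Wt (k + 2 * pi)" Wt] is_lift_nonzero[OF lift]
    by (simp add: cont continuous_on_compose2[OF cont] continuous_intros)
  moreover have "Wt (2 * pi) \<noteq> Wt 0"
    using null_homotopic_if_closed_lift[OF lift] essential by blast
  ultimately show ?thesis by (metis add_0)
qed

lemma lift_reflection:
  assumes sym: "symmetric_loop W" and lift: "is_lift W Wt"
  shows "(\<forall>k. Wt (- k) = Tmap (Wt k)) \<or> (\<forall>k. Wt (- k) = - Tmap (Wt k))"
proof -
  have cont: "continuous_on UNIV Wt" using lift by (simp add: is_lift_def)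
  have invertible: "invertible (W k)" for k
    using sym orthogonal_matrix_invertible by (auto simp: symmetric_loop_def SO4_def)
  have "W (- k) ** wmat ** W k = wmat" for k
    using sym invertible orthogonal_matrix_invertible[OF orthogonal_matrix_wmat]
    by (intro conjugate_eq_matrix_inv_imp) (simp_all add: symmetric_loop_def)
  then have "W (- k) *v (wmat *v (W k *v x)) = wmat *v x" for k x
    by (simp add: matrix_vector_mul_assoc matrix_mul_assoc)
  then have "Wt (- k) = Tmap (Wt k) \<or> Wt (- k) = - Tmap (Wt k)" for k
    using qsandwich_twisted_eq_imp_Tmap_pm[of "fst (Wt k)" "snd (Wt k)" "fst (Wt (- k))" "snd (Wt (- k))"]
    by (simp add: is_lift_norm[OF lift] is_lift_mult_vector[OF lift] wmat_mult_vector)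
  moreover have "Tmap (Wt k) \<noteq> 0" for k
    using is_lift_norm(1)[OF lift, of k] by (metis Tmap_def fst_conv fst_zero norm_qconj norm_zero
        zero_neq_one)
  ultimately show ?thesis
    using continuous_sign_constant[of UNIV "\<lambda>k. Wt (- k)" "\<lambda>k. Tmap (Wt k)"]
    by (simp add: continuous_on_compose2[OF cont] continuous_intros cont Tmap_def)
qed

subsection \<open>Fixed points of T\<close>

lemma Tmap_fixed_imp_X0_Y0:
  assumes n: "norm g = 1" "norm h = 1" and T: "Tmap (g, h) = (g, h)"
  shows "(g, h) \<in> X0 \<union> Y0"
proof -
  have "qconj g = g" and "qconj qj \<odot> qconj h \<odot> qj = h"
    using T n by (simp_all add: Tmap_def qinv_unit)
  then have g: "g$2 = 0" "g$3 = 0" "g$4 = 0" and h3: "h$3 = 0"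
    by (simp_all add: quat_eq_iff qconj_def qmult_def qj_def)
  have "(g$1)\<^sup>2 = 1" using n(1) norm_quat_squared[of g] g by simp
  then have g1: "g$1 = 1 \<or> g$1 = -1" by (simp add: power2_eq_1_iff)
  have "(h$1)\<^sup>2 + (h$2)\<^sup>2 + (h$4)\<^sup>2 = 1" using n(2) norm_quat_squared[of h] h3 by simp
  then have X0: "(qone, quat (e * h$1) (e * h$2) 0 (e * h$4)) \<in> X0" if "e = 1 \<or> e = -1" for e
    using that unfolding X0_def by (intro CollectI exI[of _ "e * h$_"]) (auto simp: power_mult_distrib)
  show ?thesis
  proof (cases "g$1 = 1")
    case True
    then have "(g, h) = (qone, quat (h$1) (h$2) 0 (h$4))"
      using g h3 by (simp add: quat_eq_iff qone_def)
    then show ?thesis using X0[of 1] by simp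
  next
    case False
    then have "(g, h) = - (qone, quat (-1 * h$1) (-1 * h$2) 0 (-1 * h$4))"
      using g g1 h3 by (simp add: quat_eq_iff qone_def)
    then show ?thesis using X0[of "-1"] unfolding Y0_def by blast
  qed
qed

lemma Tmap_antifixed_imp_X1_Y1:
  assumes n: "norm g = 1" "norm h = 1" and T: "Tmap (g, h) = - (g, h)"
  shows "(g, h) \<in> X1 \<union> Y1"
proof -
  have "qconj g = - g" and "qconj qj \<odot> qconj h \<odot> qj = - h"
    using T n by (simp_all add: Tmap_def qinv_unit)
  then have g1: "g$1 = 0" and h: "h$1 = 0" "h$2 = 0" "h$4 = 0"
    by (simp_all add: quat_eq_iff qconj_def qmult_def qj_def)
  have "(h$3)\<^sup>2 = 1" using n(2) norm_quat_squared[of h] h by simp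
  then have "h = qj \<or> h = - qj" using h by (auto simp: quat_eq_iff qj_def power2_eq_1_iff)
  moreover have "(g$2)\<^sup>2 + (g$3)\<^sup>2 + (g$4)\<^sup>2 = 1" using n(1) norm_quat_squared[of g] g1 by simp
  moreover have "g = quat 0 (g$2) (g$3) (g$4)" using g1 by (simp add: quat_eq_iff)
  ultimately show ?thesis unfolding X1_def Y1_def by blast
qed

theorem mainTheorem5:
  fixes W :: "real \<Rightarrow> real ^ 4 ^ 4" and Wt :: "real \<Rightarrow> quat \<times> quat"
  assumes "symmetric_loop W"
    and "\<not> null_homotopic_loop_SO4 W"
    and "is_lift W Wt"
  shows "(\<forall>k. Wt (k + 2 * pi) = - Wt k)
    \<and> (Tmap (Wt 0) = Wt 0 \<longrightarrow> Tmap (Wt pi) = - Wt pi \<and> Wt pi \<in> X1 \<union> Y1)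
    \<and> (Tmap (Wt 0) = - Wt 0 \<longrightarrow> Tmap (Wt pi) = Wt pi \<and> Wt pi \<in> X0 \<union> Y0)"
proof -
  have "W (k + 2 * pi) = W k" for k using assms(1) by (simp add: symmetric_loop_def)
  then have anti: "\<forall>k. Wt (k + 2 * pi) = - Wt k" using lift_antiperiodic assms(2,3) by blast
  have at_pi: "Wt pi = - Wt (- pi)" using spec[OF anti, of "- pi"] by simp
  have "Wt 0 \<noteq> - Wt 0" using is_lift_nonzero[OF assms(3)] minus_eq_self_iff by metis
  with lift_reflection[OF assms(1,3)]
  have "Tmap (Wt 0) = Wt 0 \<Longrightarrow> \<forall>k. Wt (- k) = Tmap (Wt k)"
    and "Tmap (Wt 0) = - Wt 0 \<Longrightarrow> \<forall>k. Wt (- k) = - Tmap (Wt k)"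
    by (metis minus_zero minus_minus)+
  then have "Tmap (Wt 0) = Wt 0 \<Longrightarrow> Tmap (Wt pi) = - Wt pi"
    and "Tmap (Wt 0) = - Wt 0 \<Longrightarrow> Tmap (Wt pi) = Wt pi"
    using at_pi by (metis minus_minus)+
  then show ?thesis
    using anti Tmap_fixed_imp_X0_Y0 Tmap_antifixed_imp_X1_Y1 is_lift_norm[OF assms(3), of pi]
    by (metis prod.collapse)
qed

end
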